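(* Let $k>1$ be an integer and let $q\in(0,1)$ be a fixed constant. Then there exists $c>0$ such that for a random fan $\Sigma$ chosen with respect to $T(h,1-q)$, with high probability $\delta_k(\Sigma)>c$.
   Context: A ray is a half-line $\rho=\mathbb{R}_{\ge 0}v\subset\mathbb{R}^2$ with $v\in\mathbb{Z}^2\setminus\{0\}$; $u_\rho$ is its primitive lattice generator. On $\mathbb{Z}^2$ use the norm $|(x,y)|=\max\{|x|,|y|\}$, and $|\rho|=|u_\rho|$. The completion of a finite set $S$ of rays is the fan with ray set $S$ that is maximal under inclusion among fans with ray set $S$ (its $2$-dimensional cones are spanned by angularly consecutive rays of $S$ at angle less than $\pi$). $T(h,p)$ is the distribution on fans obtained by including each ray $\rho$ with $|\rho|\le h$ independently with probability $p$ and completing. The singularity index of a $2$-dimensional cone spanned by $\rho,\tau$ is $|\det(u_\rho,u_\tau)|$. The $2$-dimensional cones of $\Sigma$ correspond to the torus-fixed points of $X(\Sigma)$. Define $\delta_k(\Sigma)$ as the number of $2$-dimensional cones of $\Sigma$ of singularity index at least $k$ divided by the total number of $2$-dimensional cones of $\Sigma$. "With high probability" means with probability tending to $1$ as $h\to\infty$. *)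

theory Defs
  imports "HOL-Probability.Probability"
begin

text \<open>Lattice vectors in Z^2 are pairs of integers.  A ray is represented by its
primitive lattice generator.\<close>

definition det2 :: "int \<times> int \<Rightarrow> int \<times> int \<Rightarrow> int" where
  "det2 u v = fst u * snd v - snd u * fst v"

definition maxnorm :: "int \<times> int \<Rightarrow> int" where
  "maxnorm u = max \<bar>fst u\<bar> \<bar>snd u\<bar>"

definition primitive :: "int \<times> int \<Rightarrow> bool" where
  "primitive u \<longleftrightarrow> u \<noteq> (0, 0) \<and> gcd (fst u) (snd u) = 1"

definition rays_upto :: "nat \<Rightarrow> (int \<times> int) set" where
  "rays_upto h = {u. primitive u \<and> maxnorm u \<le> int h}"

text \<open>Two-dimensional cones of the completion of a finite set S of rays:
  a cone spanned by rays u, v of S that are angularly consecutive (counterclockwise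
  from u to v, no ray of S strictly between them) at angle less than pi
  (i.e. det(u,v) > 0).  A ray w lies strictly between u and v (inside the open
  cone spanned by u and v, when det(u,v) > 0) iff det(u,w) > 0 and det(w,v) > 0.
  Each such cone is recorded as the ordered pair (u, v).\<close>
definition completion_cones :: "(int \<times> int) set \<Rightarrow> ((int \<times> int) \<times> (int \<times> int)) set" where
  "completion_cones S =
     {(u, v). u \<in> S \<and> v \<in> S \<and> det2 u v > 0 \<and>
              \<not> (\<exists>w\<in>S. det2 u w > 0 \<and> det2 w v > 0)}"

definition sing_index :: "int \<times> int \<Rightarrow> int \<times> int \<Rightarrow> int" where
  "sing_index u v = \<bar>det2 u v\<bar>"

text \<open>delta_k of the completion of S (Isabelle convention: 0 if there are no 2-cones).\<close>
definition delta :: "nat \<Rightarrow> (int \<times> int) set \<Rightarrow> real" where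
  "delta k S =
     real (card {(u, v) \<in> completion_cones S. sing_index u v \<ge> int k})
     / real (card (completion_cones S))"

text \<open>T(h,p): each ray of norm <= h is included independently with probability p;
  the random fan is the completion of the chosen ray set {u. f u}.\<close>
definition ray_choice :: "nat \<Rightarrow> real \<Rightarrow> ((int \<times> int) \<Rightarrow> bool) pmf" where
  "ray_choice h p = Pi_pmf (rays_upto h) False (\<lambda>_. bernoulli_pmf p)"

end

theory Submission
  imports Defs
begin

text \<open>Pick \<open>N \<approx> h / (2 k + 9)\<close>. For each of the \<open>\<approx> N\<^sup>2\<close> coprime points \<open>w\<close> of the box
  \<open>[1, N]\<^sup>2\<close> there are primitive rays \<open>u, v\<close> of norm at most \<open>h\<close> with
  \<open>det (u, w) = det (w, v) = 1\<close> and \<open>det (u, v) \<ge> k\<close>, and the open cone spanned by \<open>u, v\<close>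
  contains no other point of the box. Call \<open>w\<close> good if \<open>u, v\<close> are chosen and \<open>w\<close> is not.
  A good \<open>w\<close> lies inside a cone of the completion that sits between \<open>u\<close> and \<open>v\<close>, hence has
  index at least \<open>det (u, v) \<ge> k\<close>, and distinct good points give distinct cones. The events
  "\<open>w\<close> good" are independent with probability \<open>(1 - q)\<^sup>2 q\<close>, so by Chebyshev a constant
  fraction of the box is good with high probability, while the completion has at most
  \<open>(2 h + 1)\<^sup>2\<close> cones.\<close>

section \<open>Determinant identities\<close>

lemma det2_swap: "det2 x y = - det2 y x"
  by (simp add: det2_def)

lemma det2_self [simp]: "det2 x x = 0"
  by (simp add: det2_def)

lemma det2_cramer: "det2 x y * det2 u t = det2 t y * det2 u x + det2 x t * det2 u y"
  by (simp add: det2_def algebra_simps)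

lemma det2_plucker: "det2 u w * det2 x t = det2 x w * det2 u t - det2 u x * det2 t w"
  by (simp add: det2_def algebra_simps)

lemma det2_expand_unimodular:
  assumes "det2 u w = 1" "det2 w v = 1"
  shows "det2 x y = det2 x w * det2 y v + det2 x w * det2 w y * det2 u v + det2 u x * det2 w y"
  using assms unfolding det2_def by algebra

lemma primitive_of_det2_eq_1:
  assumes "det2 u w = 1"
  shows "primitive u" "primitive w"
proof -
  have "gcd (fst u) (snd u) dvd det2 u w" "gcd (fst w) (snd w) dvd det2 u w"
    unfolding det2_def by simp_all
  moreover have "u \<noteq> (0, 0)" "w \<noteq> (0, 0)"
    using assms by (auto simp: det2_def)
  ultimately show "primitive u" "primitive w"
    using assms by (simp_all add: primitive_def)
qed

lemma det2_eq_0_imp_multiple: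
  assumes "primitive u" "det2 u t = 0"
  obtains j where "t = (j * fst u, j * snd u)"
proof -
  obtain p r where pr: "p * fst u + r * snd u = 1"
    using bezout_int[of "fst u" "snd u"] assms(1) by (auto simp: primitive_def)
  have d: "fst u * snd t = snd u * fst t"
    using assms(2) by (simp add: det2_def)
  define j where "j = p * fst t + r * snd t"
  have "fst t = fst t * (p * fst u + r * snd u)" "snd t = snd t * (p * fst u + r * snd u)"
    using pr by simp_all
  hence "fst t = j * fst u" "snd t = j * snd u"
    unfolding j_def using d by (simp_all add: algebra_simps)
  thus thesis
    using that by (metis prod.collapse)
qed

lemma primitive_parallel_eq:
  assumes "primitive u" "primitive v" "det2 u v = 0" "det2 x u > 0" "det2 x v > 0"
  shows "u = v"
proof -
  obtain j where j: "v = (j * fst u, j * snd u)"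
    using det2_eq_0_imp_multiple assms(1,3) by blast
  have "j dvd gcd (fst v) (snd v)"
    using j by simp
  hence "j dvd 1"
    using assms(2) unfolding primitive_def by metis
  moreover have "det2 x v = j * det2 x u"
    using j by (simp add: det2_def algebra_simps)
  hence "j > 0"
    using assms(4,5) by (simp add: zero_less_mult_iff)
  ultimately have "j = 1"
    by (simp add: zdvd1_eq)
  thus ?thesis
    using j by simp
qed

section \<open>Cones of the completion\<close>

lemma det2_swap_swap: "det2 (prod.swap a) (prod.swap b) = det2 b a"
  by (simp add: det2_def)

lemma finite_completion_cones: "finite S \<Longrightarrow> finite (completion_cones S)"
  by (rule finite_subset[of _ "S \<times> S"]) (auto simp: completion_cones_def)

lemma card_completion_cones_le:
  assumes "finite S" "S \<subseteq> Collect primitive"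
  shows "card (completion_cones S) \<le> card S"
proof -
  have "inj_on fst (completion_cones S)"
  proof (rule inj_onI)
    fix c c' assume c: "c \<in> completion_cones S" and c': "c' \<in> completion_cones S"
      and eq: "fst c = fst c'"
    obtain u v v' where uv: "c = (u, v)" and uv': "c' = (u, v')"
      using eq by (metis prod.collapse)
    have "v \<in> S" "v' \<in> S" "det2 u v > 0" "det2 u v' > 0"
      and no: "\<not> det2 v v' > 0" "\<not> det2 v' v > 0"
      using c c' by (auto simp: completion_cones_def uv uv')
    moreover have "det2 v v' = 0"
      using no det2_swap[of v v'] by linarith
    ultimately have "v = v'"
      using assms(2) by (intro primitive_parallel_eq[of v v' u]) auto
    thus "c = c'"
      using uv uv' by simp
  qed
  moreover have "fst ` completion_cones S \<subseteq> S"
    by (auto simp: completion_cones_def)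
  ultimately show ?thesis
    using assms(1) by (metis card_image card_mono)
qed

text \<open>On the half-plane \<open>det2 t w > 0\<close> the ratio \<open>det2 u t / det2 t w\<close> increases
  counterclockwise (Pluecker relation), so its maximiser is angularly last.\<close>

lemma ex_angularly_last:
  assumes "finite A" "A \<noteq> {}" "det2 u w = 1" "\<And>t. t \<in> A \<Longrightarrow> det2 t w > 0"
  obtains x where "x \<in> A" "\<And>t. t \<in> A \<Longrightarrow> det2 x t \<le> 0"
proof -
  define r where "r t = real_of_int (det2 u t) / real_of_int (det2 t w)" for t
  have "Max (r ` A) \<in> r ` A"
    using assms(1,2) by simp
  then obtain x where x: "x \<in> A" "r x = Max (r ` A)"
    by auto
  have "det2 x t \<le> 0" if t: "t \<in> A" for t
  proof (rule ccontr)
    assume "\<not> det2 x t \<le> 0"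
    hence "det2 u x * det2 t w < det2 u t * det2 x w"
      using det2_plucker[of u w x t] assms(3) by (simp add: algebra_simps)
    hence "r x < r t"
      using assms(4)[OF t] assms(4)[OF x(1)] unfolding r_def
      by (simp add: divide_simps) (metis of_int_less_iff of_int_mult mult.commute)
    moreover have "r t \<le> r x"
      using x assms(1) t by simp
    ultimately show False
      by simp
  qed
  thus thesis
    using that x(1) by blast
qed

lemma ex_angularly_first:
  assumes "finite B" "B \<noteq> {}" "det2 w v = 1" "\<And>t. t \<in> B \<Longrightarrow> det2 w t > 0"
  obtains y where "y \<in> B" "\<And>t. t \<in> B \<Longrightarrow> det2 t y \<le> 0"
proof -
  have "det2 (prod.swap v) (prod.swap w) = 1"
    using assms(3) by (simp add: det2_swap_swap)
  moreover have "det2 t (prod.swap w) > 0" if t: "t \<in> prod.swap ` B" for t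
  proof -
    obtain s where "s \<in> B" "t = prod.swap s"
      using t by blast
    thus ?thesis
      using assms(4) by (simp add: det2_swap_swap)
  qed
  moreover have "finite (prod.swap ` B)" "prod.swap ` B \<noteq> {}"
    using assms(1,2) by simp_all
  ultimately obtain y' where y': "y' \<in> prod.swap ` B" "\<And>t. t \<in> prod.swap ` B \<Longrightarrow> det2 y' t \<le> 0"
    using ex_angularly_last by metis
  then obtain y where "y \<in> B" "y' = prod.swap y"
    by blast
  moreover have "det2 t y \<le> 0" if "t \<in> B" for t
    using y'(2)[of "prod.swap t"] that \<open>y' = prod.swap y\<close> by (simp add: det2_swap_swap)
  ultimately show thesis
    using that by blast
qed

lemma no_ray_between_extremes:
  assumes S: "S \<subseteq> Collect primitive" "w \<notin> S" and uw: "det2 u w = 1" and wv: "det2 w v = 1"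
    and x: "det2 x w > 0" "det2 u x \<ge> 0"
    and x_last: "\<And>t. t \<in> S \<Longrightarrow> det2 t w > 0 \<Longrightarrow> det2 u t \<ge> 0 \<Longrightarrow> det2 x t \<le> 0"
    and y: "det2 w y > 0" "det2 y v \<ge> 0"
    and y_first: "\<And>t. t \<in> S \<Longrightarrow> det2 w t > 0 \<Longrightarrow> det2 t v \<ge> 0 \<Longrightarrow> det2 t y \<le> 0"
    and t: "t \<in> S"
  shows "\<not> (det2 x t > 0 \<and> det2 t y > 0)"
proof
  assume xty: "det2 x t > 0 \<and> det2 t y > 0"
  consider "det2 t w > 0" | "det2 t w = 0" | "det2 w t > 0"
    using det2_swap[of t w] by linarith
  thus False
  proof cases
    case 1
    have "det2 u x * det2 t w \<ge> 0"
      using x(2) 1 by simp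
    hence "det2 x w * det2 u t > 0"
      using det2_plucker[of u w x t] xty by (simp add: uw)
    thus False
      using x_last[OF t 1] x(1) xty by (simp add: zero_less_mult_iff)
  next
    case 2
    have "t = w"
      using primitive_parallel_eq[of t w x] 2 S(1) t primitive_of_det2_eq_1(2)[OF uw] x(1) xty
      by auto
    thus False
      using t S(2) by simp
  next
    case 3
    have "det2 w t * det2 y v \<ge> 0"
      using y(2) 3 by simp
    hence "det2 t v * det2 w y > 0"
      using det2_plucker[of w v t y] xty by (simp add: wv)
    thus False
      using y_first[OF t 3] y(1) xty by (simp add: zero_less_mult_iff)
  qed
qed

lemma completion_cone_around:
  assumes S: "S \<subseteq> Collect primitive" "finite S" and uvS: "u \<in> S" "v \<in> S" "w \<notin> S"
    and uw: "det2 u w = 1" and wv: "det2 w v = 1" and uv: "det2 u v > 0"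
  obtains x y where "(x, y) \<in> completion_cones S" "det2 u v \<le> det2 x y"
    "det2 x w > 0" "det2 w y > 0" "det2 u x \<ge> 0" "det2 y v \<ge> 0" "det2 u y > 0" "det2 x v > 0"
proof -
  define A where "A = {x \<in> S. det2 x w > 0 \<and> det2 u x \<ge> 0}"
  define B where "B = {y \<in> S. det2 w y > 0 \<and> det2 y v \<ge> 0}"
  have "finite A" "u \<in> A" "\<And>t. t \<in> A \<Longrightarrow> det2 t w > 0"
    using S(2) uvS uw by (auto simp: A_def)
  then obtain x where xA: "x \<in> A" and x_last: "\<And>t. t \<in> A \<Longrightarrow> det2 x t \<le> 0"
    using ex_angularly_last[OF _ _ uw] by (metis empty_iff)
  have "finite B" "v \<in> B" "\<And>t. t \<in> B \<Longrightarrow> det2 w t > 0"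
    using S(2) uvS wv by (auto simp: B_def)
  then obtain y where yB: "y \<in> B" and y_first: "\<And>t. t \<in> B \<Longrightarrow> det2 t y \<le> 0"
    using ex_angularly_first[OF _ _ wv] by (metis empty_iff)
  have x: "x \<in> S" "det2 x w > 0" "det2 u x \<ge> 0" and y: "y \<in> S" "det2 w y > 0" "det2 y v \<ge> 0"
    using xA yB by (auto simp: A_def B_def)
  have "det2 x w * det2 w y \<ge> 1"
    using x(2) y(2) by (simp add: int_one_le_iff_zero_less)
  hence "det2 x w * det2 w y * det2 u v \<ge> det2 u v"
    using uv by (simp add: mult_le_cancel_right1)
  moreover have "det2 x w * det2 y v \<ge> 0" "det2 u x * det2 w y \<ge> 0"
    using x y by simp_all
  ultimately have xy: "det2 u v \<le> det2 x y"
    using det2_expand_unimodular[OF uw wv, of x y] by linarith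
  have "\<not> (det2 x t > 0 \<and> det2 t y > 0)" if "t \<in> S" for t
    using no_ray_between_extremes[OF S(1) uvS(3) uw wv x(2,3) _ y(2,3) _ that] x_last y_first
    by (auto simp: A_def B_def)
  hence "(x, y) \<in> completion_cones S"
    using x(1) y(1) xy uv by (auto simp: completion_cones_def)
  moreover have "det2 u y > 0" "det2 x v > 0"
    using det2_expand_unimodular[OF uw wv, of u y] det2_expand_unimodular[OF uw wv, of x v] x y uv
    by (simp_all add: uw wv add_nonneg_pos add_pos_nonneg)
  ultimately show thesis
    using that xy x y by blast
qed

lemma det2_pos_of_subcone:
  assumes "det2 x y > 0" "det2 u x \<ge> 0" "det2 u y > 0" "det2 x v > 0" "det2 y v \<ge> 0"
    and "det2 x t > 0" "det2 t y > 0"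
  shows "det2 u t > 0" "det2 t v > 0"
proof -
  have "det2 x y * det2 u t > 0"
    using det2_cramer[of x y u t] assms(2,3,6,7) by (simp add: add_nonneg_pos)
  thus "det2 u t > 0"
    using assms(1) by (simp add: zero_less_mult_iff)
  have "det2 x y * det2 t v = det2 t y * det2 x v + det2 x t * det2 y v"
    by (simp add: det2_def algebra_simps)
  hence "det2 x y * det2 t v > 0"
    using assms(4,5,6,7) by (simp add: add_pos_nonneg)
  thus "det2 t v > 0"
    using assms(1) by (simp add: zero_less_mult_iff)
qed

section \<open>Sector rays of the coprime box\<close>

definition coord_sum :: "int \<times> int \<Rightarrow> int" where
  "coord_sum x = fst x + snd x"

definition coprime_box :: "int \<Rightarrow> (int \<times> int) set" where
  "coprime_box N = {w. 1 \<le> fst w \<and> fst w \<le> N \<and> 1 \<le> snd w \<and> snd w \<le> N \<and> coprime (fst w) (snd w)}"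

text \<open>For \<open>w\<close> in the box pick \<open>z\<close> with \<open>det2 w z = 1\<close> and \<open>0 \<le> fst z < fst w\<close>, and put
  \<open>m = L div coord_sum w\<close>. The rays \<open>m w \<mp> z\<close> flank \<open>w\<close> unimodularly, span a cone of
  index \<open>2 m\<close>, and have coordinate sum about \<open>L\<close>, far beyond the box.\<close>

definition bezout_partner :: "int \<times> int \<Rightarrow> int \<times> int" where
  "bezout_partner w = (SOME z. det2 w z = 1 \<and> 0 \<le> fst z \<and> fst z < fst w)"

definition sector_mult :: "int \<Rightarrow> int \<times> int \<Rightarrow> int" where
  "sector_mult L w = L div coord_sum w"

definition lower_ray :: "int \<Rightarrow> int \<times> int \<Rightarrow> int \<times> int" where
  "lower_ray L w = (sector_mult L w * fst w - fst (bezout_partner w),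
                    sector_mult L w * snd w - snd (bezout_partner w))"

definition upper_ray :: "int \<Rightarrow> int \<times> int \<Rightarrow> int \<times> int" where
  "upper_ray L w = (sector_mult L w * fst w + fst (bezout_partner w),
                    sector_mult L w * snd w + snd (bezout_partner w))"

lemma coord_sum_unimodular_expand:
  "det2 p q = 1 \<Longrightarrow> coord_sum t = det2 t q * coord_sum p + det2 p t * coord_sum q"
  unfolding coord_sum_def det2_def by algebra

lemma coord_sum_coprime_box:
  assumes "w \<in> coprime_box N"
  shows "2 \<le> coord_sum w" "coord_sum w \<le> 2 * N"
  using assms by (auto simp: coprime_box_def coord_sum_def)

lemma primitive_det2_eq_0_coord_sum_less:
  assumes "primitive u" "det2 u t = 0" "\<bar>coord_sum t\<bar> < coord_sum u"
  shows "t = (0, 0)"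
proof -
  obtain j where j: "t = (j * fst u, j * snd u)"
    using det2_eq_0_imp_multiple assms(1,2) by blast
  hence "\<bar>j\<bar> * coord_sum u < coord_sum u"
    using assms(3) by (simp add: coord_sum_def abs_mult algebra_simps)
  moreover have "coord_sum u \<le> \<bar>j\<bar> * coord_sum u" if "j \<noteq> 0"
    using that assms(3) by (intro mult_le_cancel_right1[THEN iffD2]) auto
  ultimately have "j = 0"
    by fastforce
  thus ?thesis
    using j by simp
qed

lemma bezout_partner:
  assumes "w \<in> coprime_box N"
  shows "det2 w (bezout_partner w) = 1" "0 \<le> fst (bezout_partner w)"
    "fst (bezout_partner w) < fst w"
proof -
  obtain a b where ab: "a * fst w + b * snd w = 1"
    using bezout_int[of "fst w" "snd w"] assms by (auto simp: coprime_box_def coprime_iff_gcd_eq_1)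
  have "fst w \<ge> 1"
    using assms by (simp add: coprime_box_def)
  define c where "c = - b mod fst w"
  define d where "d = a - snd w * (- b div fst w)"
  have "fst w * d - snd w * c = 1"
    using ab div_mult_mod_eq[of "- b" "fst w"] unfolding c_def d_def by algebra
  hence "det2 w (c, d) = 1"
    by (simp add: det2_def)
  moreover have "0 \<le> c" "c < fst w"
    using \<open>fst w \<ge> 1\<close> by (simp_all add: c_def)
  ultimately have "\<exists>z. det2 w z = 1 \<and> 0 \<le> fst z \<and> fst z < fst w"
    by (intro exI[of _ "(c, d)"]) simp
  from someI_ex[OF this] show "det2 w (bezout_partner w) = 1" "0 \<le> fst (bezout_partner w)"
    "fst (bezout_partner w) < fst w"
    unfolding bezout_partner_def by simp_all
qed

lemma bezout_partner_snd:
  assumes "w \<in> coprime_box N"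
  shows "1 \<le> snd (bezout_partner w)" "snd (bezout_partner w) \<le> snd w"
proof -
  obtain a b c d where w: "w = (a, b)" and z: "bezout_partner w = (c, d)"
    by (metis prod.collapse)
  have ab: "1 \<le> a" "1 \<le> b"
    using assms w by (auto simp: coprime_box_def)
  have ad: "a * d = 1 + b * c" and c: "0 \<le> c" "c < a"
    using bezout_partner[OF assms] w z by (auto simp: det2_def)
  have "b * c \<le> b * (a - 1)"
    using ab c by (intro mult_left_mono) simp_all
  hence "a * d \<le> a * b"
    using ad ab by (simp add: algebra_simps)
  moreover have "b * c \<ge> 0"
    using ab c by simp
  hence "a * d > 0"
    using ad by linarith
  hence "d > 0"
    using ab by (simp add: zero_less_mult_iff)
  ultimately show "1 \<le> snd (bezout_partner w)" "snd (bezout_partner w) \<le> snd w"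
    using ab w z by simp_all
qed

lemma det2_lower_ray:
  "w \<in> coprime_box N \<Longrightarrow> det2 (lower_ray L w) w = 1"
  using bezout_partner(1)[of w N] by (simp add: lower_ray_def det2_def algebra_simps)

lemma det2_upper_ray:
  "w \<in> coprime_box N \<Longrightarrow> det2 w (upper_ray L w) = 1"
  using bezout_partner(1)[of w N] by (simp add: upper_ray_def det2_def algebra_simps)

lemma det2_lower_upper_ray:
  "w \<in> coprime_box N \<Longrightarrow> det2 (lower_ray L w) (upper_ray L w) = 2 * sector_mult L w"
  using bezout_partner(1)[of w N]
  unfolding lower_ray_def upper_ray_def det2_def fst_conv snd_conv by algebra

lemma sector_mult_bounds:
  assumes "w \<in> coprime_box N" "L \<ge> 0"
  shows "0 \<le> sector_mult L w" "sector_mult L w * coord_sum w \<le> L"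
    "L < sector_mult L w * coord_sum w + coord_sum w" "L div (2 * N) \<le> sector_mult L w"
proof -
  have s: "2 \<le> coord_sum w" "coord_sum w \<le> 2 * N"
    using coord_sum_coprime_box[OF assms(1)] by simp_all
  show "0 \<le> sector_mult L w" "L div (2 * N) \<le> sector_mult L w"
    using s assms(2) by (simp_all add: sector_mult_def pos_imp_zdiv_nonneg_iff zdiv_mono2)
  have "0 \<le> L mod coord_sum w" "L mod coord_sum w < coord_sum w"
    using s by simp_all
  thus "sector_mult L w * coord_sum w \<le> L" "L < sector_mult L w * coord_sum w + coord_sum w"
    using div_mult_mod_eq[of L "coord_sum w"] unfolding sector_mult_def by linarith+
qed

lemma coord_sum_sector_rays:
  assumes "w \<in> coprime_box N" "L \<ge> 0"
  shows "coord_sum (lower_ray L w) > L - 2 * coord_sum w" "coord_sum (upper_ray L w) > L - coord_sum w"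
  using sector_mult_bounds(3)[OF assms] bezout_partner[OF assms(1)] bezout_partner_snd[OF assms(1)]
  by (simp_all add: lower_ray_def upper_ray_def coord_sum_def algebra_simps)

lemma maxnorm_sector_rays:
  assumes "w \<in> coprime_box N" "L \<ge> 0"
  shows "maxnorm (lower_ray L w) \<le> L + N" "maxnorm (upper_ray L w) \<le> L + N"
proof -
  define m where "m = sector_mult L w"
  have w: "1 \<le> fst w" "fst w \<le> N" "1 \<le> snd w" "snd w \<le> N"
    using assms(1) by (simp_all add: coprime_box_def)
  have "0 \<le> m" "m * (fst w + snd w) \<le> L"
    using sector_mult_bounds(1,2)[OF assms] by (simp_all add: m_def coord_sum_def)
  moreover have nonneg: "0 \<le> m * fst w" "0 \<le> m * snd w"
    using \<open>0 \<le> m\<close> w by simp_all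
  ultimately have "m * fst w \<le> L" "m * snd w \<le> L"
    by (simp_all add: distrib_left)
  with nonneg show "maxnorm (lower_ray L w) \<le> L + N" "maxnorm (upper_ray L w) \<le> L + N"
    using w bezout_partner[OF assms(1)] bezout_partner_snd[OF assms(1)] assms(2)
    by (auto simp: lower_ray_def upper_ray_def maxnorm_def m_def[symmetric] abs_le_iff)
qed

lemma coord_sum_sector_rays_large:
  assumes "w \<in> coprime_box N" "L \<ge> 8 * N"
  shows "coord_sum (lower_ray L w) > 4 * N" "coord_sum (upper_ray L w) > 6 * N"
proof -
  have "L \<ge> 0"
    using assms by (auto simp: coprime_box_def)
  thus "coord_sum (lower_ray L w) > 4 * N" "coord_sum (upper_ray L w) > 6 * N"
    using coord_sum_sector_rays[OF assms(1)] coord_sum_coprime_box[OF assms(1)] assms(2) by fastforce+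
qed

lemma sector_rays_notin_coprime_box:
  assumes "w \<in> coprime_box N" "L \<ge> 8 * N"
  shows "lower_ray L w \<notin> coprime_box N" "upper_ray L w \<notin> coprime_box N"
proof -
  have "N \<ge> 1"
    using assms(1) by (simp add: coprime_box_def)
  thus "lower_ray L w \<notin> coprime_box N" "upper_ray L w \<notin> coprime_box N"
    using coord_sum_sector_rays_large[OF assms] coord_sum_coprime_box(2)[of _ N] by fastforce+
qed

lemma lower_ray_inj_on:
  assumes "L \<ge> 8 * N"
  shows "inj_on (lower_ray L) (coprime_box N)"
proof (rule inj_onI)
  fix w w' assume w: "w \<in> coprime_box N" and w': "w' \<in> coprime_box N"
    and eq: "lower_ray L w = lower_ray L w'"
  define t where "t = (fst w - fst w', snd w - snd w')"
  have "det2 (lower_ray L w) t = det2 (lower_ray L w) w - det2 (lower_ray L w') w'"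
    unfolding eq by (simp add: t_def det2_def algebra_simps)
  hence "det2 (lower_ray L w) t = 0"
    using det2_lower_ray[OF w] det2_lower_ray[OF w'] by simp
  moreover have "\<bar>coord_sum t\<bar> < coord_sum (lower_ray L w)"
    using coord_sum_sector_rays_large(1)[OF w assms] coord_sum_coprime_box[OF w]
      coord_sum_coprime_box[OF w'] by (simp add: t_def coord_sum_def)
  ultimately have "t = (0, 0)"
    using primitive_det2_eq_0_coord_sum_less primitive_of_det2_eq_1(1)[OF det2_lower_ray[OF w]]
    by blast
  thus "w = w'"
    by (simp add: t_def prod_eq_iff)
qed

lemma upper_ray_inj_on:
  assumes "L \<ge> 8 * N"
  shows "inj_on (upper_ray L) (coprime_box N)"
proof (rule inj_onI)
  fix w w' assume w: "w \<in> coprime_box N" and w': "w' \<in> coprime_box N"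
    and eq: "upper_ray L w = upper_ray L w'"
  define t where "t = (fst w - fst w', snd w - snd w')"
  have "det2 (upper_ray L w) t = det2 w' (upper_ray L w') - det2 w (upper_ray L w)"
    unfolding eq by (simp add: t_def det2_def algebra_simps)
  hence "det2 (upper_ray L w) t = 0"
    using det2_upper_ray[OF w] det2_upper_ray[OF w'] by simp
  moreover have "\<bar>coord_sum t\<bar> < coord_sum (upper_ray L w)"
    using coord_sum_sector_rays_large(2)[OF w assms] coord_sum_coprime_box[OF w]
      coord_sum_coprime_box[OF w'] by (simp add: t_def coord_sum_def)
  ultimately have "t = (0, 0)"
    using primitive_det2_eq_0_coord_sum_less primitive_of_det2_eq_1(2)[OF det2_upper_ray[OF w]]
    by blast
  thus "w = w'"
    by (simp add: t_def prod_eq_iff)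
qed

lemma lower_ray_ne_upper_ray:
  assumes "w \<in> coprime_box N" "w' \<in> coprime_box N" "L \<ge> 8 * N"
  shows "lower_ray L w \<noteq> upper_ray L w'"
proof
  assume eq: "lower_ray L w = upper_ray L w'"
  define t where "t = (fst w + fst w', snd w + snd w')"
  have "det2 (lower_ray L w) t = det2 (lower_ray L w) w - det2 w' (upper_ray L w')"
    unfolding eq by (simp add: t_def det2_def algebra_simps)
  hence "det2 (lower_ray L w) t = 0"
    using det2_lower_ray[OF assms(1)] det2_upper_ray[OF assms(2)] by simp
  moreover have "\<bar>coord_sum t\<bar> < coord_sum (lower_ray L w)"
    using coord_sum_sector_rays_large(1)[OF assms(1,3)] coord_sum_coprime_box[OF assms(1)]
      coord_sum_coprime_box[OF assms(2)] by (simp add: t_def coord_sum_def)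
  ultimately have "t = (0, 0)"
    using primitive_det2_eq_0_coord_sum_less primitive_of_det2_eq_1(1)[OF det2_lower_ray[OF assms(1)]]
    by blast
  thus False
    using coord_sum_coprime_box(1)[OF assms(1)] coord_sum_coprime_box(1)[OF assms(2)]
    by (simp add: t_def coord_sum_def prod_eq_iff)
qed

text \<open>The open cone spanned by the sector rays of \<open>w\<close> contains no other point of the box:
  writing a point \<open>w'\<close> of it in the unimodular basis \<open>w\<close>, \<open>upper_ray L w\<close> (or
  \<open>lower_ray L w\<close>, \<open>w\<close>) would force a coordinate sum above \<open>2 N\<close>.\<close>

lemma sector_excludes_coprime_box:
  assumes w: "w \<in> coprime_box N" and w': "w' \<in> coprime_box N" and L: "L \<ge> 8 * N"
    and ne: "w \<noteq> w'"
  shows "\<not> (det2 (lower_ray L w) w' > 0 \<and> det2 w' (upper_ray L w) > 0)"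
proof
  define U V where "U = lower_ray L w" and "V = upper_ray L w"
  assume "det2 (lower_ray L w) w' > 0 \<and> det2 w' (upper_ray L w) > 0"
  hence Uw': "det2 U w' > 0" and w'V: "det2 w' V > 0"
    by (simp_all add: U_def V_def)
  have Uw: "det2 U w = 1" and wV: "det2 w V = 1"
    using det2_lower_ray[OF w] det2_upper_ray[OF w] by (simp_all add: U_def V_def)
  have sU: "coord_sum U > 4 * N" and sV: "coord_sum V > 6 * N"
    using coord_sum_sector_rays_large[OF w L] by (simp_all add: U_def V_def)
  have sw: "2 \<le> coord_sum w" and sw': "2 \<le> coord_sum w'" "coord_sum w' \<le> 2 * N"
    using coord_sum_coprime_box[OF w] coord_sum_coprime_box[OF w'] by simp_all
  consider "det2 w w' > 0" | "det2 w w' = 0" | "det2 w' w > 0"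
    using det2_swap[of w w'] by linarith
  thus False
  proof cases
    case 1
    have "det2 w' V * coord_sum w \<ge> 0" "det2 w w' * coord_sum V \<ge> coord_sum V"
      using w'V sw 1 sV sw' by simp_all
    thus False
      using coord_sum_unimodular_expand[OF wV, of w'] sV sw' by linarith
  next
    case 2
    have "primitive w" "primitive w'"
      using primitive_of_det2_eq_1(2) det2_lower_ray w w' by blast+
    hence "w = w'"
      using primitive_parallel_eq[of w w' U] 2 Uw Uw' by simp
    thus False
      using ne by simp
  next
    case 3
    have "det2 U w' * coord_sum w \<ge> 0" "det2 w' w * coord_sum U \<ge> coord_sum U"
      using Uw' sw 3 sU sw' by simp_all
    thus False
      using coord_sum_unimodular_expand[OF Uw, of w'] sU sw' by linarith
  qed
qed

text \<open>Each good \<open>w\<close> (sector rays chosen, \<open>w\<close> itself not) lies inside a singular cone of the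
  completion contained in its sector; since the sectors of distinct points of the box do not
  contain each other's points, distinct good points lie in distinct cones.\<close>

lemma card_good_le_card_singular_cones:
  assumes S: "S \<subseteq> Collect primitive" "finite S" and G: "G \<subseteq> coprime_box N" and L: "L \<ge> 8 * N"
    and good: "\<And>w. w \<in> G \<Longrightarrow> lower_ray L w \<in> S \<and> upper_ray L w \<in> S \<and> w \<notin> S"
    and K: "K > 0" "\<And>w. w \<in> G \<Longrightarrow> K \<le> det2 (lower_ray L w) (upper_ray L w)"
  shows "card G \<le> card {(x, y) \<in> completion_cones S. K \<le> sing_index x y}"
proof -
  define H where "H = {(x, y) \<in> completion_cones S. K \<le> sing_index x y}"
  define around where "around w c \<longleftrightarrow> c \<in> H \<and> det2 (fst c) (snd c) > 0 \<and>
      det2 (fst c) w > 0 \<and> det2 w (snd c) > 0 \<and>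
      det2 (lower_ray L w) (fst c) \<ge> 0 \<and> det2 (lower_ray L w) (snd c) > 0 \<and>
      det2 (fst c) (upper_ray L w) > 0 \<and> det2 (snd c) (upper_ray L w) \<ge> 0" for w c
  have "\<exists>c. around w c" if w: "w \<in> G" for w
  proof -
    have wB: "w \<in> coprime_box N"
      using w G by blast
    have rays: "lower_ray L w \<in> S" "upper_ray L w \<in> S" "w \<notin> S"
      using good[OF w] by auto
    have "det2 (lower_ray L w) (upper_ray L w) > 0"
      using K(1) K(2)[OF w] by linarith
    then obtain x y where "(x, y) \<in> completion_cones S" "det2 (lower_ray L w) (upper_ray L w) \<le> det2 x y"
      "det2 x w > 0" "det2 w y > 0" "det2 (lower_ray L w) x \<ge> 0" "det2 y (upper_ray L w) \<ge> 0"
      "det2 (lower_ray L w) y > 0" "det2 x (upper_ray L w) > 0"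
      by (rule completion_cone_around[OF S rays det2_lower_ray[OF wB] det2_upper_ray[OF wB]])
    thus ?thesis
      using K(1) K(2)[OF w] by (intro exI[of _ "(x, y)"]) (auto simp: around_def H_def sing_index_def)
  qed
  then obtain g where g: "\<And>w. w \<in> G \<Longrightarrow> around w (g w)"
    by metis
  have "inj_on g G"
  proof (rule inj_onI, rule ccontr)
    fix w w' assume w: "w \<in> G" and w': "w' \<in> G" and eq: "g w = g w'" and ne: "w \<noteq> w'"
    have "around w (g w)" "around w' (g w)"
      using g[OF w] g[OF w'] eq by simp_all
    hence "det2 (lower_ray L w) w' > 0 \<and> det2 w' (upper_ray L w) > 0"
      unfolding around_def using det2_pos_of_subcone[of "fst (g w)" "snd (g w)"] by blast
    thus False
      using sector_excludes_coprime_box[OF _ _ L ne] w w' G by blast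
  qed
  moreover have "g ` G \<subseteq> H"
    using g by (auto simp: around_def)
  moreover have "finite H"
    using finite_completion_cones[OF S(2)] by (rule finite_subset[rotated]) (auto simp: H_def)
  ultimately show ?thesis
    unfolding H_def[symmetric] by (metis card_image card_mono)
qed

section \<open>Counting coprime pairs\<close>

lemma sum_inverse_squares_le:
  fixes n :: nat
  assumes "n \<ge> 1"
  shows "(\<Sum>d\<in>{2..n}. 1 / (real d)\<^sup>2) \<le> 2 / 3 - 2 / (2 * real n + 1)"
  using assms
proof (induction n rule: dec_induct)
  case base
  thus ?case
    by simp
next
  case (step n)
  have telescope: "1 / (real n + 1)\<^sup>2 \<le> 2 / (2 * real n + 1) - 2 / (2 * real n + 3)"
  proof -
    have "(2 * real n + 1) * (2 * real n + 3) \<le> 4 * (real n + 1)\<^sup>2"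
      by (simp add: power2_eq_square algebra_simps)
    hence "4 / (4 * (real n + 1)\<^sup>2) \<le> 4 / ((2 * real n + 1) * (2 * real n + 3))"
      by (intro divide_left_mono) (auto intro: mult_pos_pos)
    thus ?thesis
      by (simp add: field_simps)
  qed
  have "(\<Sum>d\<in>{2..Suc n}. 1 / (real d)\<^sup>2) = (\<Sum>d\<in>{2..n}. 1 / (real d)\<^sup>2) + 1 / (real n + 1)\<^sup>2"
    using step(1) by (simp add: atLeastAtMostSuc_conv)
  also have "\<dots> \<le> 2 / 3 - 2 / (2 * real (Suc n) + 1)"
    using step(3) telescope by (simp add: add.commute)
  finally show ?case .
qed

lemma card_multiples_le:
  fixes n d :: nat
  assumes "d \<ge> 1"
  shows "card {a \<in> {1..n}. d dvd a} \<le> n div d"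
proof -
  have "{a \<in> {1..n}. d dvd a} \<subseteq> (\<lambda>j. d * j) ` {1..n div d}"
  proof
    fix a assume "a \<in> {a \<in> {1..n}. d dvd a}"
    then obtain j where a: "a = d * j" "1 \<le> a" "a \<le> n"
      by auto
    have "j \<ge> 1"
      using a by (cases j) auto
    moreover have "j \<le> n div d"
      using a assms by (metis div_le_mono nonzero_mult_div_cancel_left not_one_le_zero)
    ultimately show "a \<in> (\<lambda>j. d * j) ` {1..n div d}"
      using a by auto
  qed
  hence "card {a \<in> {1..n}. d dvd a} \<le> card ((\<lambda>j. d * j) ` {1..n div d})"
    by (intro card_mono) auto
  also have "\<dots> \<le> n div d"
    using card_image_le[of "{1..n div d}" "\<lambda>j. d * j"] by simp
  finally show ?thesis .
qed

lemma not_coprime_pairs_subset: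
  "{p \<in> {1..n} \<times> {1..n}. \<not> coprime (fst p) (snd p)}
     \<subseteq> (\<Union>d\<in>{2..n}. {a \<in> {1..n}. d dvd a} \<times> {a \<in> {1..n::nat}. d dvd a})"
proof
  fix p assume p: "p \<in> {p \<in> {1..n} \<times> {1..n}. \<not> coprime (fst p) (snd p)}"
  obtain a b where ab: "p = (a, b)" "1 \<le> a" "a \<le> n" "1 \<le> b" "b \<le> n" "\<not> coprime a b"
    using p by auto
  define g where "g = gcd a b"
  have "g \<noteq> 1" "g > 0"
    using ab by (simp_all add: g_def coprime_iff_gcd_eq_1)
  moreover have "g \<le> n"
    using ab by (metis g_def gcd_le1_nat not_one_le_zero order.trans)
  ultimately have "g \<in> {2..n}"
    by simp
  moreover have "p \<in> {a \<in> {1..n}. g dvd a} \<times> {a \<in> {1..n}. g dvd a}"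
    using ab by (simp add: g_def)
  ultimately show "p \<in> (\<Union>d\<in>{2..n}. {a \<in> {1..n}. d dvd a} \<times> {a \<in> {1..n}. d dvd a})"
    by (rule UN_I)
qed

lemma card_common_multiples_le:
  fixes n d :: nat
  assumes "d \<ge> 1"
  shows "real (card ({a \<in> {1..n}. d dvd a} \<times> {a \<in> {1..n}. d dvd a})) \<le> (real n / real d)\<^sup>2"
proof -
  have "card ({a \<in> {1..n}. d dvd a} \<times> {a \<in> {1..n}. d dvd a}) \<le> (n div d) * (n div d)"
    using card_multiples_le[OF assms, of n] by (simp add: card_cartesian_product mult_le_mono)
  hence "real (card ({a \<in> {1..n}. d dvd a} \<times> {a \<in> {1..n}. d dvd a}))
      \<le> real (n div d) * real (n div d)"
    unfolding of_nat_mult[symmetric] of_nat_le_iff .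
  also have "\<dots> \<le> (real n / real d) * (real n / real d)"
    by (intro mult_mono) (simp_all add: of_nat_div_le_of_nat)
  finally show ?thesis
    by (simp only: power2_eq_square)
qed

text \<open>Non-coprime pairs share a divisor \<open>d \<ge> 2\<close>; summing the counts \<open>(n / d)\<^sup>2\<close> over \<open>d\<close>
  leaves at most two thirds of the square.\<close>

lemma card_not_coprime_pairs_le:
  fixes n :: nat
  assumes "n \<ge> 1"
  shows "real (card {p \<in> {1..n} \<times> {1..n}. \<not> coprime (fst p) (snd p)}) \<le> 2 / 3 * real n ^ 2"
proof -
  define M where "M d = {a \<in> {1..n}. d dvd a} \<times> {a \<in> {1..n}. d dvd a}" for d
  have "card {p \<in> {1..n} \<times> {1..n}. \<not> coprime (fst p) (snd p)} \<le> card (\<Union>d\<in>{2..n}. M d)"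
    unfolding M_def by (rule card_mono[OF _ not_coprime_pairs_subset]) simp
  also have "\<dots> \<le> (\<Sum>d\<in>{2..n}. card (M d))"
    by (rule card_UN_le) simp
  finally have "real (card {p \<in> {1..n} \<times> {1..n}. \<not> coprime (fst p) (snd p)})
      \<le> (\<Sum>d\<in>{2..n}. real (card (M d)))"
    unfolding of_nat_sum[symmetric] of_nat_le_iff .
  also have "\<dots> \<le> (\<Sum>d\<in>{2..n}. (real n / real d)\<^sup>2)"
  proof (rule sum_mono)
    fix d assume "d \<in> {2..n}"
    thus "real (card (M d)) \<le> (real n / real d)\<^sup>2"
      unfolding M_def by (intro card_common_multiples_le) simp
  qed
  also have "\<dots> = real n ^ 2 * (\<Sum>d\<in>{2..n}. 1 / (real d)\<^sup>2)"
    by (simp add: sum_distrib_left power_divide)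
  also have "\<dots> \<le> real n ^ 2 * (2 / 3)"
  proof -
    have "0 \<le> 2 / (2 * real n + 1)"
      by simp
    hence "(\<Sum>d\<in>{2..n}. 1 / (real d)\<^sup>2) \<le> 2 / 3"
      using sum_inverse_squares_le[OF assms] by linarith
    thus ?thesis
      by (rule mult_left_mono) simp
  qed
  finally show ?thesis
    by simp
qed

lemma card_coprime_pairs_ge:
  fixes n :: nat
  assumes "n \<ge> 1"
  shows "real (card {p \<in> {1..n} \<times> {1..n}. coprime (fst p) (snd p)}) \<ge> real n ^ 2 / 3"
proof -
  define C where "C = {p \<in> {1..n} \<times> {1..n}. coprime (fst p) (snd p)}"
  define D where "D = {p \<in> {1..n} \<times> {1..n}. \<not> coprime (fst p) (snd p)}"
  have "C \<union> D = {1..n} \<times> {1..n}" "C \<inter> D = {}" "finite C" "finite D"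
    by (auto simp: C_def D_def)
  hence "card ({1..n} \<times> {1..n}) = card C + card D"
    using card_Un_disjoint[of C D] by simp
  hence "real (n * n) = real (card C + card D)"
    by simp
  hence "real n ^ 2 = real (card C) + real (card D)"
    by (simp add: power2_eq_square)
  thus ?thesis
    using card_not_coprime_pairs_le[OF assms] by (simp add: C_def D_def)
qed

lemma finite_coprime_box: "finite (coprime_box N)"
  by (rule finite_subset[of _ "{1..N} \<times> {1..N}"]) (auto simp: coprime_box_def)

lemma card_coprime_box_ge:
  fixes n :: nat
  assumes "n \<ge> 1"
  shows "real (card (coprime_box (int n))) \<ge> real n ^ 2 / 3"
proof -
  define C where "C = {p \<in> {1..n} \<times> {1..n}. coprime (fst p) (snd p)}"
  have "(\<lambda>p. (int (fst p), int (snd p))) ` C \<subseteq> coprime_box (int n)"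
    by (auto simp: C_def coprime_box_def)
  moreover have "inj_on (\<lambda>p. (int (fst p), int (snd p))) C"
    by (auto simp: inj_on_def prod_eq_iff)
  ultimately have "card C \<le> card (coprime_box (int n))"
    using finite_coprime_box by (metis card_image card_mono)
  thus ?thesis
    using card_coprime_pairs_ge[OF assms] unfolding C_def by linarith
qed

section \<open>Independent patterns of coin flips\<close>

definition pattern :: "'a set \<Rightarrow> 'a set \<Rightarrow> ('a \<Rightarrow> bool) set" where
  "pattern T F = {f. (\<forall>x\<in>T. f x) \<and> (\<forall>x\<in>F. \<not> f x)}"

lemma pattern_Int: "pattern T F \<inter> pattern T' F' = pattern (T \<union> T') (F \<union> F')"
  by (auto simp: pattern_def)

lemma prob_Pi_pmf_pattern:
  assumes "finite R" "T \<subseteq> R" "F \<subseteq> R" "T \<inter> F = {}" "0 \<le> p" "p \<le> 1"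
  shows "measure_pmf.prob (Pi_pmf R False (\<lambda>_. bernoulli_pmf p)) (pattern T F)
         = p ^ card T * (1 - p) ^ card F"
proof -
  define B where "B x = (if x \<in> T then {True} else if x \<in> F then {False} else UNIV)" for x
  have "pattern T F = Pi R B"
    using assms(2-4) by (auto simp: pattern_def B_def Pi_def split: if_splits)
  hence "measure_pmf.prob (Pi_pmf R False (\<lambda>_. bernoulli_pmf p)) (pattern T F)
         = (\<Prod>x\<in>R. measure_pmf.prob (bernoulli_pmf p) (B x))"
    using measure_Pi_pmf_Pi[OF assms(1)] by simp
  also have "\<dots> = (\<Prod>x\<in>T \<union> F. measure_pmf.prob (bernoulli_pmf p) (B x))"
    using assms(1-3) by (intro prod.mono_neutral_right) (auto simp: B_def)
  also have "\<dots> = (\<Prod>x\<in>T. measure_pmf.prob (bernoulli_pmf p) (B x)) *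
                  (\<Prod>x\<in>F. measure_pmf.prob (bernoulli_pmf p) (B x))"
    using assms(1-4) finite_subset by (intro prod.union_disjoint) auto
  also have "\<dots> = (\<Prod>x\<in>T. p) * (\<Prod>x\<in>F. 1 - p)"
    using assms(4-6) by (intro arg_cong2[where f = "(*)"] prod.cong) (auto simp: B_def measure_pmf_single)
  finally show ?thesis
    by simp
qed

lemma integrable_measure_pmf_indicator: "integrable (measure_pmf M) (indicator A :: _ \<Rightarrow> real)"
  by (simp add: less_top[symmetric])

definition count_patterns :: "'i set \<Rightarrow> ('i \<Rightarrow> 'a set) \<Rightarrow> ('i \<Rightarrow> 'a set) \<Rightarrow> ('a \<Rightarrow> bool) \<Rightarrow> real"
  where "count_patterns I yes no f = (\<Sum>i\<in>I. indicator (pattern (yes i) (no i)) f)"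

lemma count_patterns_eq_card:
  "finite I \<Longrightarrow> count_patterns I yes no f = real (card {i \<in> I. f \<in> pattern (yes i) (no i)})"
  unfolding count_patterns_def indicator_def by (simp add: sum.If_cases Int_def)

text \<open>Patterns of distinct indices involve disjoint coordinates, hence are independent, and the
  second moment of their count is explicit; Chebyshev's inequality then concentrates it.\<close>

context
  fixes R :: "'a set" and I :: "'i set" and yes no :: "'i \<Rightarrow> 'a set" and p :: real and a b :: nat
  assumes finite_R: "finite R" and finite_I: "finite I" and p: "0 \<le> p" "p \<le> 1"
    and pattern_in_R: "\<And>i. i \<in> I \<Longrightarrow> yes i \<subseteq> R \<and> no i \<subseteq> R \<and> yes i \<inter> no i = {}"
    and card_yes: "\<And>i. i \<in> I \<Longrightarrow> card (yes i) = a"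
    and card_no: "\<And>i. i \<in> I \<Longrightarrow> card (no i) = b"
    and disjoint: "\<And>i j. i \<in> I \<Longrightarrow> j \<in> I \<Longrightarrow> i \<noteq> j \<Longrightarrow> (yes i \<union> no i) \<inter> (yes j \<union> no j) = {}"
begin

lemma prob_pattern_index:
  "i \<in> I \<Longrightarrow> measure_pmf.prob (Pi_pmf R False (\<lambda>_. bernoulli_pmf p)) (pattern (yes i) (no i))
     = p ^ a * (1 - p) ^ b"
  using prob_Pi_pmf_pattern[OF finite_R _ _ _ p] pattern_in_R card_yes card_no by simp

lemma prob_pattern_pair:
  assumes "i \<in> I" "j \<in> I" "i \<noteq> j"
  shows "measure_pmf.prob (Pi_pmf R False (\<lambda>_. bernoulli_pmf p))
           (pattern (yes i) (no i) \<inter> pattern (yes j) (no j)) = (p ^ a * (1 - p) ^ b)\<^sup>2"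
proof -
  have fin: "finite (yes i)" "finite (yes j)" "finite (no i)" "finite (no j)"
    using pattern_in_R assms(1,2) finite_R finite_subset by meson+
  have "yes i \<inter> yes j = {}" "no i \<inter> no j = {}"
    using disjoint[OF assms] by auto
  hence "card (yes i \<union> yes j) = 2 * a" "card (no i \<union> no j) = 2 * b"
    using fin card_yes card_no assms(1,2) by (simp_all add: card_Un_disjoint)
  moreover have "(yes i \<union> yes j) \<inter> (no i \<union> no j) = {}"
    using disjoint[OF assms] pattern_in_R assms(1,2) by blast
  ultimately show ?thesis
    using prob_Pi_pmf_pattern[OF finite_R _ _ _ p, of "yes i \<union> yes j" "no i \<union> no j"]
      pattern_in_R assms(1,2)
    by (simp add: pattern_Int power_mult_distrib power_mult[symmetric] mult.commute)
qed

lemma expectation_count_patterns: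
  "measure_pmf.expectation (Pi_pmf R False (\<lambda>_. bernoulli_pmf p)) (count_patterns I yes no)
     = card I * (p ^ a * (1 - p) ^ b)"
proof -
  have "measure_pmf.expectation (Pi_pmf R False (\<lambda>_. bernoulli_pmf p)) (count_patterns I yes no)
      = (\<Sum>i\<in>I. measure_pmf.prob (Pi_pmf R False (\<lambda>_. bernoulli_pmf p)) (pattern (yes i) (no i)))"
    unfolding count_patterns_def
    by (simp add: Bochner_Integration.integral_sum integrable_measure_pmf_indicator)
  thus ?thesis
    using prob_pattern_index by simp
qed

lemma expectation_count_patterns_sq:
  defines "\<rho> \<equiv> p ^ a * (1 - p) ^ b" and "n \<equiv> real (card I)"
  shows "measure_pmf.expectation (Pi_pmf R False (\<lambda>_. bernoulli_pmf p)) (\<lambda>f. (count_patterns I yes no f)\<^sup>2)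
     = n * \<rho> + n * (n - 1) * \<rho>\<^sup>2"
proof -
  define E where "E i = pattern (yes i) (no i)" for i
  have "(count_patterns I yes no f)\<^sup>2 = (\<Sum>i\<in>I. \<Sum>j\<in>I. indicator (E i \<inter> E j) f)" for f
    unfolding count_patterns_def power2_eq_square sum_product E_def
    by (simp add: indicator_inter_arith)
  hence "measure_pmf.expectation (Pi_pmf R False (\<lambda>_. bernoulli_pmf p)) (\<lambda>f. (count_patterns I yes no f)\<^sup>2)
      = (\<Sum>i\<in>I. \<Sum>j\<in>I. measure_pmf.prob (Pi_pmf R False (\<lambda>_. bernoulli_pmf p)) (E i \<inter> E j))"
    by (simp add: Bochner_Integration.integral_sum Bochner_Integration.integrable_sum
        integrable_measure_pmf_indicator)
  also have "\<dots> = (\<Sum>i\<in>I. \<rho> + (\<Sum>j\<in>I - {i}. \<rho>\<^sup>2))"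
  proof (intro sum.cong refl)
    fix i assume i: "i \<in> I"
    have "(\<Sum>j\<in>I. measure_pmf.prob (Pi_pmf R False (\<lambda>_. bernoulli_pmf p)) (E i \<inter> E j))
        = measure_pmf.prob (Pi_pmf R False (\<lambda>_. bernoulli_pmf p)) (E i)
          + (\<Sum>j\<in>I - {i}. measure_pmf.prob (Pi_pmf R False (\<lambda>_. bernoulli_pmf p)) (E i \<inter> E j))"
      using finite_I i by (simp add: sum.remove)
    also have "\<dots> = \<rho> + (\<Sum>j\<in>I - {i}. \<rho>\<^sup>2)"
      using i prob_pattern_index prob_pattern_pair
      by (intro arg_cong2[where f = "(+)"] sum.cong) (auto simp: E_def \<rho>_def)
    finally show "(\<Sum>j\<in>I. measure_pmf.prob (Pi_pmf R False (\<lambda>_. bernoulli_pmf p)) (E i \<inter> E j))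
        = \<rho> + (\<Sum>j\<in>I - {i}. \<rho>\<^sup>2)" .
  qed
  also have "\<dots> = (\<Sum>i\<in>I. \<rho> + (n - 1) * \<rho>\<^sup>2)"
  proof (intro sum.cong refl)
    fix i assume "i \<in> I"
    hence "card I \<ge> 1"
      using finite_I by (auto simp: Suc_le_eq card_gt_0_iff)
    hence "real (card (I - {i})) = n - 1"
      using finite_I \<open>i \<in> I\<close> by (simp add: n_def card_Diff_singleton of_nat_diff)
    thus "\<rho> + (\<Sum>j\<in>I - {i}. \<rho>\<^sup>2) = \<rho> + (n - 1) * \<rho>\<^sup>2"
      by simp
  qed
  also have "\<dots> = n * \<rho> + n * (n - 1) * \<rho>\<^sup>2"
    by (simp add: n_def algebra_simps)
  finally show ?thesis .
qed

lemma prob_count_patterns_gt: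
  defines "\<rho> \<equiv> p ^ a * (1 - p) ^ b" and "n \<equiv> real (card I)"
  assumes "\<rho> > 0" "I \<noteq> {}"
  shows "1 - 4 / (\<rho> * n)
    \<le> measure_pmf.prob (Pi_pmf R False (\<lambda>_. bernoulli_pmf p))
         {f. real (card {i \<in> I. f \<in> pattern (yes i) (no i)}) > \<rho> * n / 2}"
proof -
  define P where "P = Pi_pmf R False (\<lambda>_. bernoulli_pmf p)"
  have n: "n > 0"
    using assms(4) finite_I by (simp add: n_def card_gt_0_iff)
  have count_bound: "\<bar>count_patterns I yes no f\<bar> \<le> n" for f
    using finite_I unfolding count_patterns_eq_card[OF finite_I] n_def by (simp add: card_mono)
  hence "\<bar>(count_patterns I yes no f)\<^sup>2\<bar> \<le> n\<^sup>2" for f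
    using n abs_le_square_iff[of "count_patterns I yes no f" n] by simp
  hence integrable: "integrable (measure_pmf P) (count_patterns I yes no)"
      "integrable (measure_pmf P) (\<lambda>f. (count_patterns I yes no f)\<^sup>2)"
    using count_bound
    by (auto intro: measure_pmf.integrable_const_bound[where B = n]
        measure_pmf.integrable_const_bound[where B = "n\<^sup>2"])
  have variance: "measure_pmf.variance P (count_patterns I yes no) = n * (\<rho> - \<rho>\<^sup>2)"
    using measure_pmf.variance_eq[OF integrable] expectation_count_patterns
      expectation_count_patterns_sq
    by (simp add: P_def \<rho>_def n_def algebra_simps power2_eq_square)
  define far where "far = {f. \<rho> * n / 2 \<le> \<bar>count_patterns I yes no f - \<rho> * n\<bar>}"
  have "measure_pmf.prob P far \<le> n * (\<rho> - \<rho>\<^sup>2) / (\<rho> * n / 2)\<^sup>2"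
    using measure_pmf.Chebyshev_inequality[OF _ integrable(2), of "\<rho> * n / 2"] assms(3) n
      expectation_count_patterns variance
    by (simp add: far_def P_def \<rho>_def n_def mult.commute)
  also have "\<dots> \<le> 4 / (\<rho> * n)"
    using assms(3) n by (simp add: field_simps power2_eq_square)
  finally have "1 - 4 / (\<rho> * n) \<le> measure_pmf.prob P (UNIV - far)"
    using measure_pmf.prob_compl[of far P] by simp
  also have "\<dots> \<le> measure_pmf.prob P {f. count_patterns I yes no f > \<rho> * n / 2}"
    by (intro measure_pmf.finite_measure_mono) (auto simp: far_def abs_if split: if_splits)
  finally show ?thesis
    by (simp add: P_def count_patterns_eq_card[OF finite_I])
qed

end

section \<open>The random fan\<close>

lemma finite_rays_upto: "finite (rays_upto h)"
  by (rule finite_subset[of _ "{-int h..int h} \<times> {-int h..int h}"])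
     (auto simp: rays_upto_def maxnorm_def)

lemma card_rays_upto_le: "real (card (rays_upto h)) \<le> (2 * real h + 1)\<^sup>2"
proof -
  have "card (rays_upto h) \<le> card ({-int h..int h} \<times> {-int h..int h})"
    by (rule card_mono) (auto simp: rays_upto_def maxnorm_def)
  also have "\<dots> = (2 * h + 1) * (2 * h + 1)"
  proof -
    have "int h - - int h + 1 = int (2 * h + 1)"
      by simp
    hence "card {-int h..int h} = 2 * h + 1"
      by (simp only: card_atLeastAtMost_int nat_int)
    thus ?thesis
      by (simp add: card_cartesian_product)
  qed
  finally have "real (card (rays_upto h)) \<le> real ((2 * h + 1) * (2 * h + 1))"
    by (simp only: of_nat_le_iff)
  thus ?thesis
    by (simp add: power2_eq_square algebra_simps)
qed

lemma delta_ge_card_singular_cones: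
  assumes "S \<subseteq> rays_upto h"
  shows "real (card {(u, v) \<in> completion_cones S. int k \<le> sing_index u v}) / (2 * real h + 1)\<^sup>2
         \<le> delta k S"
proof -
  define H where "H = {(u, v) \<in> completion_cones S. int k \<le> sing_index u v}"
  have S: "finite S" "S \<subseteq> Collect primitive"
    using assms finite_rays_upto[of h] by (auto intro: finite_subset simp: rays_upto_def)
  have "card H \<le> card (completion_cones S)"
    by (rule card_mono[OF finite_completion_cones[OF S(1)]]) (auto simp: H_def)
  moreover have "real (card (completion_cones S)) \<le> (2 * real h + 1)\<^sup>2"
    using card_completion_cones_le[OF S] card_mono[OF finite_rays_upto assms] card_rays_upto_le[of h]
    by linarith
  ultimately have "real (card H) / (2 * real h + 1)\<^sup>2 \<le> real (card H) / real (card (completion_cones S))"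
    by (cases "card H = 0") (auto intro!: divide_left_mono)
  thus ?thesis
    by (simp add: delta_def H_def)
qed

lemma delta_gt_of_card_good:
  assumes S: "S \<subseteq> rays_upto h" and h: "h \<ge> 1" and L: "L \<ge> 8 * N" and k: "k > 0"
    and index: "\<And>w. w \<in> coprime_box N \<Longrightarrow> int k \<le> det2 (lower_ray L w) (upper_ray L w)"
    and many: "real (card {w \<in> coprime_box N. lower_ray L w \<in> S \<and> upper_ray L w \<in> S \<and> w \<notin> S}) > x"
  shows "delta k S > x / (9 * real h ^ 2)"
proof -
  define G where "G = {w \<in> coprime_box N. lower_ray L w \<in> S \<and> upper_ray L w \<in> S \<and> w \<notin> S}"
  define H where "H = {(u, v) \<in> completion_cones S. int k \<le> sing_index u v}"
  have "S \<subseteq> Collect primitive" "finite S"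
    using S finite_subset[OF S finite_rays_upto] by (auto simp: rays_upto_def)
  hence GH: "card G \<le> card H"
    unfolding G_def H_def using k index by (intro card_good_le_card_singular_cones[OF _ _ _ L]) auto
  have "(2 * real h + 1)\<^sup>2 = 4 * real h ^ 2 + 4 * real h + 1"
    by (simp add: power2_eq_square algebra_simps)
  moreover have "real h \<le> real h ^ 2" "1 \<le> real h ^ 2"
    using h mult_mono[of 1 "real h" 1 "real h"] by (simp_all add: power2_eq_square)
  ultimately have square: "(2 * real h + 1)\<^sup>2 \<le> 9 * real h ^ 2"
    by linarith
  have "x / (9 * real h ^ 2) < real (card G) / (9 * real h ^ 2)"
    using many h by (simp add: G_def divide_strict_right_mono)
  also have "\<dots> \<le> real (card H) / (2 * real h + 1)\<^sup>2"
    using GH square by (intro frac_le) simp_all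
  also have "\<dots> \<le> delta k S"
    unfolding H_def by (rule delta_ge_card_singular_cones[OF S])
  finally show ?thesis .
qed

lemma sector_rays_in_rays_upto:
  assumes "w \<in> coprime_box N" "0 \<le> L" "L + N \<le> int h"
  shows "lower_ray L w \<in> rays_upto h" "upper_ray L w \<in> rays_upto h" "w \<in> rays_upto h"
  using primitive_of_det2_eq_1[OF det2_lower_ray[OF assms(1)]]
    primitive_of_det2_eq_1(2)[OF det2_upper_ray[OF assms(1)]] maxnorm_sector_rays[OF assms(1,2)]
    assms by (auto simp: rays_upto_def coprime_box_def maxnorm_def)

lemma prob_many_good_sectors:
  fixes h :: nat and p :: real
  assumes L: "L \<ge> 8 * N" "L + N \<le> int h" and box: "coprime_box N \<noteq> {}" and p: "0 < p" "p < 1"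
  defines "n \<equiv> real (card (coprime_box N))"
  shows "1 - 4 / (p\<^sup>2 * (1 - p) * n) \<le> measure_pmf.prob (ray_choice h p)
    {f. real (card {w \<in> coprime_box N. f (lower_ray L w) \<and> f (upper_ray L w) \<and> \<not> f w})
        > p\<^sup>2 * (1 - p) * n / 2}"
proof -
  define yes where "yes w = {lower_ray L w, upper_ray L w}" for w
  define no where "no w = {w}" for w :: "int \<times> int"
  have "L \<ge> 0"
    using box L(1) by (auto simp: coprime_box_def)
  have in_rays: "yes w \<subseteq> rays_upto h \<and> no w \<subseteq> rays_upto h \<and> yes w \<inter> no w = {}"
    and card_yes: "card (yes w) = 2" if w: "w \<in> coprime_box N" for w
    using sector_rays_in_rays_upto[OF w \<open>L \<ge> 0\<close> L(2)] sector_rays_notin_coprime_box[OF w L(1)]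
      lower_ray_ne_upper_ray[OF w w L(1)] w
    by (auto simp: yes_def no_def)
  have disjoint: "(yes w \<union> no w) \<inter> (yes w' \<union> no w') = {}"
    if w: "w \<in> coprime_box N" "w' \<in> coprime_box N" "w \<noteq> w'" for w w'
    using w inj_onD[OF lower_ray_inj_on[OF L(1)], of w w'] inj_onD[OF upper_ray_inj_on[OF L(1)], of w w']
      lower_ray_ne_upper_ray[OF w(1,2) L(1)] lower_ray_ne_upper_ray[OF w(2,1) L(1)]
      sector_rays_notin_coprime_box[OF w(1) L(1)] sector_rays_notin_coprime_box[OF w(2) L(1)]
    by (auto simp: yes_def no_def)
  have "{w \<in> coprime_box N. f (lower_ray L w) \<and> f (upper_ray L w) \<and> \<not> f w}
      = {w \<in> coprime_box N. f \<in> pattern (yes w) (no w)}" for f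
    by (auto simp: pattern_def yes_def no_def)
  moreover have "1 - 4 / (p ^ 2 * (1 - p) ^ 1 * n) \<le> measure_pmf.prob (ray_choice h p)
      {f. real (card {w \<in> coprime_box N. f \<in> pattern (yes w) (no w)}) > p ^ 2 * (1 - p) ^ 1 * n / 2}"
    unfolding ray_choice_def n_def
    by (rule prob_count_patterns_gt[OF finite_rays_upto finite_coprime_box _ _ in_rays card_yes _ disjoint])
      (use p box in \<open>auto simp: no_def\<close>)
  ultimately show ?thesis
    by simp
qed

lemma card_coprime_box_div_ge:
  fixes h B :: nat
  assumes "0 < B" "B \<le> h"
  shows "real (card (coprime_box (int (h div B)))) \<ge> real h ^ 2 / (12 * real B ^ 2)"
proof -
  define n where "n = h div B"
  have "n \<ge> 1"
    using div_le_mono[OF assms(2), of B] assms(1) by (simp add: n_def)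
  have "real h = real n * real B + real (h mod B)"
    by (metis n_def div_mult_mod_eq of_nat_add of_nat_mult)
  moreover have "real (h mod B) < real B" "real B \<le> real n * real B"
    using assms(1) \<open>n \<ge> 1\<close> by simp_all
  ultimately have "real h \<le> 2 * real n * real B"
    by linarith
  hence "real h ^ 2 \<le> (2 * real n * real B) ^ 2"
    by (intro power_mono) simp_all
  hence "real h ^ 2 \<le> 4 * real B ^ 2 * real n ^ 2"
    by (simp add: power_mult_distrib mult.commute mult.left_commute)
  hence "real h ^ 2 / (12 * real B ^ 2) \<le> real n ^ 2 / 3"
    using assms(1) by (simp add: field_simps)
  thus ?thesis
    using card_coprime_box_ge[OF \<open>n \<ge> 1\<close>] by (simp add: n_def)
qed

lemma det2_sector_rays_ge:
  assumes w: "w \<in> coprime_box N"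
  shows "int k \<le> det2 (lower_ray (2 * N * (int k + 4)) w) (upper_ray (2 * N * (int k + 4)) w)"
proof -
  have "N \<ge> 1"
    using w by (simp add: coprime_box_def)
  hence "2 * N * (int k + 4) div (2 * N) = int k + 4" "2 * N * (int k + 4) \<ge> 0"
    by simp_all
  thus ?thesis
    using sector_mult_bounds(4)[OF w] det2_lower_upper_ray[OF w] by fastforce
qed

text \<open>With \<open>N = h div B\<close> and \<open>L = 2 N (k + 4)\<close> the sector rays have norm at most
  \<open>N B \<le> h\<close> and index at least \<open>2 (k + 4)\<close>, while the box holds order \<open>h\<^sup>2\<close> points.\<close>

lemma prob_delta_gt:
  fixes k h :: nat and q :: real
  assumes k: "k > 0" and q: "0 < q" "q < 1" and h: "h \<ge> 2 * k + 9"
  defines "B \<equiv> 2 * k + 9" and "\<rho> \<equiv> (1 - q)\<^sup>2 * q"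
  shows "1 - 48 * real B ^ 2 / (\<rho> * real h)
    \<le> measure_pmf.prob (ray_choice h (1 - q)) {f. delta k {u. f u} > \<rho> / (216 * real B ^ 2)}"
proof -
  define N where "N = int (h div B)"
  define L where "L = 2 * N * (int k + 4)"
  define n where "n = real (card (coprime_box N))"
  define good where
    "good f = {w \<in> coprime_box N. f (lower_ray L w) \<and> f (upper_ray L w) \<and> \<not> f w}" for f
  have \<rho>: "\<rho> > 0" and h1: "real h \<ge> 1" and B: "real B > 0"
    using q h by (simp_all add: \<rho>_def B_def)
  have n: "n \<ge> real h ^ 2 / (12 * real B ^ 2)"
    using card_coprime_box_div_ge[of B h] h by (simp add: n_def N_def B_def)
  moreover have "real h ^ 2 / (12 * real B ^ 2) > 0"
    using h1 by (simp add: B_def)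
  ultimately have "n > 0" "coprime_box N \<noteq> {}"
    by (auto simp: n_def)
  have "0 \<le> N * int k"
    by (simp add: N_def)
  hence L8: "L \<ge> 8 * N"
    by (simp add: L_def algebra_simps)
  have "L + N = int (h div B * B)"
    by (simp add: L_def N_def B_def algebra_simps)
  hence LN: "L + N \<le> int h"
    using div_times_less_eq_dividend[of h B] by linarith
  have index: "int k \<le> det2 (lower_ray L w) (upper_ray L w)" if "w \<in> coprime_box N" for w
    unfolding L_def by (rule det2_sector_rays_ge[OF that])
  have "4 / (\<rho> * n) \<le> 48 * real B ^ 2 / (\<rho> * real h ^ 2)"
    using n \<rho> h1 B \<open>n > 0\<close> by (simp add: field_simps)
  also have "\<dots> \<le> 48 * real B ^ 2 / (\<rho> * real h)"
    using \<rho> h1 by (intro divide_left_mono mult_left_mono mult_pos_pos) (simp_all add: power2_eq_square)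
  finally have "1 - 48 * real B ^ 2 / (\<rho> * real h) \<le> 1 - 4 / (\<rho> * n)"
    by simp
  also have "\<dots> \<le> measure_pmf.prob (ray_choice h (1 - q)) {f. real (card (good f)) > \<rho> * n / 2}"
    using prob_many_good_sectors[OF L8 LN \<open>coprime_box N \<noteq> {}\<close>, of "1 - q"] q
    by (simp add: \<rho>_def n_def good_def)
  also have "\<dots> \<le> measure_pmf.prob (ray_choice h (1 - q)) {f. delta k {u. f u} > \<rho> / (216 * real B ^ 2)}"
  proof (rule measure_pmf.finite_measure_mono_AE)
    have "\<rho> / (216 * real B ^ 2) \<le> \<rho> * n / 2 / (9 * real h ^ 2)"
      using n \<rho> h1 B by (simp add: field_simps)
    moreover have "delta k {u. f u} > \<rho> * n / 2 / (9 * real h ^ 2)"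
      if "f \<in> set_pmf (ray_choice h (1 - q))" "real (card (good f)) > \<rho> * n / 2" for f
      using that h set_Pi_pmf_subset[OF finite_rays_upto, of h False]
      by (intro delta_gt_of_card_good[OF _ _ L8 k index]) (auto simp: good_def ray_choice_def)
    ultimately show "AE f in ray_choice h (1 - q). f \<in> {f. real (card (good f)) > \<rho> * n / 2}
        \<longrightarrow> f \<in> {f. delta k {u. f u} > \<rho> / (216 * real B ^ 2)}"
      unfolding AE_measure_pmf_iff by (auto intro: order.strict_trans1)
  qed simp
  finally show ?thesis .
qed

theorem theorem2:
  fixes k :: nat and q :: real
  assumes "k > 1" and "0 < q" and "q < 1"
  shows "\<exists>c>0. (\<lambda>h. measure_pmf.prob (ray_choice h (1 - q))
                        {f. delta k {u. f u} > c}) \<longlonglongrightarrow> 1"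
proof -
  define B where "B = 2 * k + 9"
  define \<rho> where "\<rho> = (1 - q)\<^sup>2 * q"
  define c where "c = \<rho> / (216 * real B ^ 2)"
  define C where "C = 48 * real B ^ 2 / \<rho>"
  define prob_good where
    "prob_good h = measure_pmf.prob (ray_choice h (1 - q)) {f. delta k {u. f u} > c}" for h
  have "c > 0"
    using assms by (simp add: c_def \<rho>_def B_def)
  have "eventually (\<lambda>h. 1 - C / real h \<le> prob_good h) sequentially"
    using eventually_ge_at_top[of "2 * k + 9"]
    by eventually_elim (use prob_delta_gt assms in \<open>simp add: prob_good_def c_def C_def B_def \<rho>_def\<close>)
  moreover have "eventually (\<lambda>h. prob_good h \<le> 1) sequentially"
    by (simp add: prob_good_def measure_pmf.prob_le_1)
  moreover have "(\<lambda>h. 1 - C / real h) \<longlonglongrightarrow> 1"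
    using tendsto_diff[OF tendsto_const lim_const_over_n[of C]] by simp
  ultimately have "prob_good \<longlonglongrightarrow> 1"
    by (rule tendsto_sandwich[OF _ _ _ tendsto_const])
  thus ?thesis
    using \<open>c > 0\<close> unfolding prob_good_def by blast
qed

end
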